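(* Let $r\ge1$ and let $\tau$ be a permutation of $F^r$ with $\tau(\mathbf 0)=\mathbf 0$. Then for any $a,b\in F^r$ the permutation $(\sigma_a|\sigma_b)$ of the points, defined by $(\{c\},\emptyset)\mapsto(\{c+a\},\emptyset)$ and $(\emptyset,\{c\})\mapsto(\emptyset,\{c+b\})$ for all $c\in F^r$, belongs to $\mathrm{Aut}(SQS_\tau)$. In particular, $\mathrm{Aut}(SQS_\tau)$ either acts transitively on the points of $SQS_\tau$ or has exactly two orbits on points, namely $\{(\{a\},\emptyset):a\in F^r\}$ and $\{(\emptyset,\{a\}):a\in F^r\}$.
   Context: $F=\mathrm{GF}(2)$, $\mathbf 0$ is the all-zero vector. The point set consists of the $2^{r+1}$ symbols $(\{a\},\emptyset)$ and $(\emptyset,\{a\})$, $a\in F^r$; a pair $(X,Y)$ with $X,Y\subseteq F^r$ denotes the set of points $\{(\{x\},\emptyset):x\in X\}\cup\{(\emptyset,\{y\}):y\in Y\}$. $SQS_\tau=Q_0\cup Q_1\cup Q_\tau$ where $Q_0=\{(\{a,b,c,d\},\emptyset): a,b,c,d\in F^r \text{ pairwise distinct}, a+b+c+d=\mathbf 0\}$, $Q_1=\{(\emptyset,\{a,b,c,d\}): a,b,c,d\in F^r \text{ pairwise distinct}, a+b+c+d=\mathbf 0\}$, $Q_\tau=\{(\{a,c\},\{b,d\}): a,b,c,d\in F^r, \tau(a+c)=b+d\neq\mathbf 0\}$. $\mathrm{Aut}(SQS_\tau)$ is the group of permutations of the point set mapping the set of quadruples onto itself. *)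

theory Defs
  imports "HOL-Library.Z2" "HOL-Analysis.Finite_Cartesian_Product"
begin

text \<open>F = GF(2) is the type bit; F^r is bit ^ 'n with CARD('n) = r.
  Points: Inl c stands for ({c},{}) and Inr c for ({},{c}).\<close>

type_synonym 'n point = "(bit ^ 'n) + (bit ^ 'n)"

definition Q0 :: "('n::finite) point set set" where
  "Q0 = {{Inl a, Inl b, Inl c, Inl d} | a b c d.
           distinct [a, b, c, d] \<and> a + b + c + d = 0}"

definition Q1 :: "('n::finite) point set set" where
  "Q1 = {{Inr a, Inr b, Inr c, Inr d} | a b c d.
           distinct [a, b, c, d] \<and> a + b + c + d = 0}"

definition Qtau :: "(bit ^ ('n::finite) \<Rightarrow> bit ^ 'n) \<Rightarrow> 'n point set set" where
  "Qtau \<tau> = {{Inl a, Inl c, Inr b, Inr d} | a b c d.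
           \<tau> (a + c) = b + d \<and> b + d \<noteq> 0}"

definition SQS :: "(bit ^ ('n::finite) \<Rightarrow> bit ^ 'n) \<Rightarrow> 'n point set set" where
  "SQS \<tau> = Q0 \<union> Q1 \<union> Qtau \<tau>"

definition Aut :: "(bit ^ ('n::finite) \<Rightarrow> bit ^ 'n) \<Rightarrow> ('n point \<Rightarrow> 'n point) set" where
  "Aut \<tau> = {\<pi>. bij \<pi> \<and> (\<lambda>B. \<pi> ` B) ` SQS \<tau> = SQS \<tau>}"

definition sigma_pair :: "bit ^ ('n::finite) \<Rightarrow> bit ^ 'n \<Rightarrow> 'n point \<Rightarrow> 'n point" where
  "sigma_pair a b = case_sum (\<lambda>c. Inl (c + a)) (\<lambda>c. Inr (c + b))"

definition point_orbits :: "(bit ^ ('n::finite) \<Rightarrow> bit ^ 'n) \<Rightarrow> 'n point set set" where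
  "point_orbits \<tau> = {{g x | g. g \<in> Aut \<tau>} | x. True}"

end

theory Submission
  imports Defs
begin

text \<open>Over GF(2) a translation by a fixes every sum of an even number of points, since
  a + a = 0. Hence translating the left points by a and the right points by b preserves the
  sum of the four points of a block of Q0 or Q1, and the sums of the two left and of the two
  right points of a block of Qtau; being an involution, it is an automorphism. These
  translations already act transitively on each of the two halves of the point set, so the
  orbits of the automorphism group are either both halves or everything, depending on whether
  some automorphism moves a left point to a right one.\<close>

lemma vec_bit_add_self [simp]: "(x :: bit ^ 'n::finite) + x = 0"
  by (simp add: vec_eq_iff)

lemma vec_bit_add_self_left [simp]: "(x :: bit ^ 'n::finite) + (x + y) = y"
  by (simp flip: add.assoc)

lemma sigma_pair_Inl [simp]: "sigma_pair a b (Inl c) = Inl (c + a)"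
  and sigma_pair_Inr [simp]: "sigma_pair a b (Inr c) = Inr (c + b)"
  by (simp_all add: sigma_pair_def)

lemma sigma_pair_sigma_pair [simp]: "sigma_pair a b (sigma_pair a b p) = p"
  by (cases p) (simp_all add: add.assoc)

lemma zero_sum_quadruple_translate:
  fixes p q r s a :: "bit ^ 'n::finite"
  assumes "distinct [p, q, r, s]" and "p + q + r + s = 0"
  shows "distinct [p + a, q + a, r + a, s + a] \<and> (p + a) + (q + a) + (r + a) + (s + a) = 0"
proof
  have "(p + a) + (q + a) + (r + a) + (s + a) = p + q + r + s"
    by (simp add: algebra_simps)
  with assms(2) show "(p + a) + (q + a) + (r + a) + (s + a) = 0"
    by (simp only:)
qed (use assms(1) in auto)

lemma translate_sum2: "(p + a) + (q + a) = p + q"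
  for p q a :: "bit ^ 'n::finite"
  by (simp add: algebra_simps)

lemma sigma_pair_image_Q0: "sigma_pair a b ` B \<in> Q0" if "B \<in> Q0"
proof -
  from that obtain p q r s where B: "B = {Inl p, Inl q, Inl r, Inl s}"
    and "distinct [p, q, r, s]" and "p + q + r + s = 0"
    unfolding Q0_def by blast
  from \<open>distinct [p, q, r, s]\<close> \<open>p + q + r + s = 0\<close>
  have "distinct [p + a, q + a, r + a, s + a] \<and> (p + a) + (q + a) + (r + a) + (s + a) = 0"
    by (rule zero_sum_quadruple_translate)
  moreover have "sigma_pair a b ` B = {Inl (p + a), Inl (q + a), Inl (r + a), Inl (s + a)}"
    by (simp add: B)
  ultimately show ?thesis
    unfolding Q0_def by blast
qed

lemma sigma_pair_image_Q1: "sigma_pair a b ` B \<in> Q1" if "B \<in> Q1"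
proof -
  from that obtain p q r s where B: "B = {Inr p, Inr q, Inr r, Inr s}"
    and "distinct [p, q, r, s]" and "p + q + r + s = 0"
    unfolding Q1_def by blast
  from \<open>distinct [p, q, r, s]\<close> \<open>p + q + r + s = 0\<close>
  have "distinct [p + b, q + b, r + b, s + b] \<and> (p + b) + (q + b) + (r + b) + (s + b) = 0"
    by (rule zero_sum_quadruple_translate)
  moreover have "sigma_pair a b ` B = {Inr (p + b), Inr (q + b), Inr (r + b), Inr (s + b)}"
    by (simp add: B)
  ultimately show ?thesis
    unfolding Q1_def by blast
qed

lemma sigma_pair_image_Qtau: "sigma_pair a b ` B \<in> Qtau \<tau>" if "B \<in> Qtau \<tau>"
proof -
  from that obtain p q r s where B: "B = {Inl p, Inl r, Inr q, Inr s}"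
    and "\<tau> (p + r) = q + s" and "q + s \<noteq> 0"
    unfolding Qtau_def by blast
  moreover have "(p + a) + (r + a) = p + r" and "(q + b) + (s + b) = q + s"
    by (rule translate_sum2)+
  ultimately have "\<tau> ((p + a) + (r + a)) = (q + b) + (s + b)" and "(q + b) + (s + b) \<noteq> 0"
    by simp_all
  moreover have "sigma_pair a b ` B = {Inl (p + a), Inl (r + a), Inr (q + b), Inr (s + b)}"
    by (simp add: B)
  ultimately show ?thesis
    unfolding Qtau_def by blast
qed

lemma sigma_pair_image_SQS: "(\<lambda>B. sigma_pair a b ` B) ` SQS \<tau> \<subseteq> SQS \<tau>"
  unfolding SQS_def
  using sigma_pair_image_Q0 sigma_pair_image_Q1 sigma_pair_image_Qtau by blast

lemma involution_image_eq:
  assumes "\<And>x. f (f x) = x" and "f ` A \<subseteq> A"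
  shows "f ` A = A"
proof -
  have "A = f ` f ` A"
    by (simp add: image_image assms(1))
  also have "\<dots> \<subseteq> f ` A"
    using assms(2) by (rule image_mono)
  finally show ?thesis
    using assms(2) by blast
qed

lemma sigma_pair_in_Aut: "sigma_pair a b \<in> Aut \<tau>"
proof -
  have "(\<lambda>B. sigma_pair a b ` B) ` SQS \<tau> = SQS \<tau>"
    by (rule involution_image_eq) (simp_all add: image_image sigma_pair_image_SQS)
  moreover have "bij (sigma_pair a b)"
    by (rule involuntory_imp_bij) simp
  ultimately show ?thesis
    unfolding Aut_def by blast
qed

lemma Aut_bij: "bij g" if "g \<in> Aut \<tau>"
  using that unfolding Aut_def by blast

lemma Aut_comp: "g \<circ> h \<in> Aut \<tau>" if "g \<in> Aut \<tau>" and "h \<in> Aut \<tau>"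
proof -
  have "(\<lambda>B. (g \<circ> h) ` B) ` SQS \<tau> = (\<lambda>B. g ` B) ` (\<lambda>B. h ` B) ` SQS \<tau>"
    by (simp add: image_image image_comp)
  then show ?thesis
    using that unfolding Aut_def by (simp add: bij_comp)
qed

lemma Aut_inv: "inv g \<in> Aut \<tau>" if "g \<in> Aut \<tau>"
proof -
  have "bij g" and SQS: "(\<lambda>B. g ` B) ` SQS \<tau> = SQS \<tau>"
    using that unfolding Aut_def by auto
  then have "(\<lambda>B. inv g ` B) ` SQS \<tau> = (\<lambda>B. inv g ` g ` B) ` SQS \<tau>"
    by (metis image_image)
  also have "\<dots> = SQS \<tau>"
    using \<open>bij g\<close> by (simp add: image_inv_f_f bij_is_inj)
  finally show ?thesis
    using \<open>bij g\<close> bij_imp_bij_inv unfolding Aut_def by blast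
qed

lemma orbit_eqI:
  assumes "\<And>g. g \<in> G \<Longrightarrow> g x \<in> A" and "\<And>y. y \<in> A \<Longrightarrow> \<exists>g\<in>G. g x = y"
  shows "{g x | g. g \<in> G} = A"
proof (intro equalityI subsetI)
  fix y assume "y \<in> A"
  then obtain g where "g \<in> G" and "g x = y"
    using assms(2) by blast
  then show "y \<in> {g x | g. g \<in> G}"
    by (intro CollectI exI[of _ g]) simp
qed (use assms(1) in blast)

locale perm_group_transitive_on_summands =
  fixes G :: "('a + 'b \<Rightarrow> 'a + 'b) set"
  assumes bij: "\<And>g. g \<in> G \<Longrightarrow> bij g"
    and comp: "\<And>g h. g \<in> G \<Longrightarrow> h \<in> G \<Longrightarrow> g \<circ> h \<in> G"
    and inv: "\<And>g. g \<in> G \<Longrightarrow> inv g \<in> G"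
    and transitive_Inl: "\<And>c d. \<exists>g\<in>G. g (Inl c) = Inl d"
    and transitive_Inr: "\<And>c d. \<exists>g\<in>G. g (Inr c) = Inr d"
begin

lemma inv_apply: "inv g y = x" if "g \<in> G" and "g x = y"
  using that bij by (metis bij_is_inj inv_f_f)

lemma transitive_if_mixing:
  assumes "g \<in> G" and "g (Inl c) = Inr d"
  shows "\<exists>h\<in>G. h x = y"
proof -
  have Inl_to_Inr: "\<exists>h\<in>G. h (Inl u) = Inr v" for u v
  proof -
    obtain h1 where "h1 \<in> G" "h1 (Inl u) = Inl c"
      using transitive_Inl by blast
    moreover obtain h2 where "h2 \<in> G" "h2 (Inr d) = Inr v"
      using transitive_Inr by blast
    ultimately have "h2 \<circ> g \<circ> h1 \<in> G" and "(h2 \<circ> g \<circ> h1) (Inl u) = Inr v"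
      using assms comp by auto
    then show ?thesis by blast
  qed
  have Inr_to_Inl: "\<exists>h\<in>G. h (Inr v) = Inl u" for u v
    using Inl_to_Inr[of u v] inv inv_apply by blast
  show ?thesis
    using transitive_Inl transitive_Inr Inl_to_Inr Inr_to_Inl
    by (cases x; cases y) auto
qed

lemma orbits_if_not_mixing:
  assumes not_mixing: "\<And>g c d. g \<in> G \<Longrightarrow> g (Inl c) \<noteq> Inr d"
  shows "{{g x | g. g \<in> G} | x. True} = {range Inl, range Inr}"
proof -
  have orbit_Inl: "{g (Inl c) | g. g \<in> G} = range Inl" for c
  proof (rule orbit_eqI)
    show "g (Inl c) \<in> range Inl" if "g \<in> G" for g
      using not_mixing[OF that] by (cases "g (Inl c)") auto
    show "\<exists>g\<in>G. g (Inl c) = y" if "y \<in> range Inl" for y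
      using that transitive_Inl by blast
  qed
  have orbit_Inr: "{g (Inr c) | g. g \<in> G} = range Inr" for c
  proof (rule orbit_eqI)
    show "g (Inr c) \<in> range Inr" if "g \<in> G" for g
    proof (cases "g (Inr c)")
      case (Inl d)
      with that have "inv g (Inl d) = Inr c"
        by (rule inv_apply)
      then show ?thesis
        using not_mixing inv[OF that] by blast
    qed auto
    show "\<exists>g\<in>G. g (Inr c) = y" if "y \<in> range Inr" for y
      using that transitive_Inr by blast
  qed
  have "{g x | g. g \<in> G} \<in> {range Inl, range Inr}" for x
    by (cases x) (simp_all add: orbit_Inl orbit_Inr)
  moreover have "range Inl = {g (Inl undefined) | g. g \<in> G}"
    and "range Inr = {g (Inr undefined) | g. g \<in> G}"
    by (simp_all add: orbit_Inl orbit_Inr)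
  ultimately show ?thesis
    by blast
qed

theorem transitive_or_two_orbits:
  "(\<forall>x y. \<exists>g\<in>G. g x = y) \<or> {{g x | g. g \<in> G} | x. True} = {range Inl, range Inr}"
proof (cases "\<exists>g\<in>G. \<exists>c d. g (Inl c) = Inr d")
  case True
  then obtain g c d where "g \<in> G" and "g (Inl c) = Inr d"
    by blast
  then have "\<forall>x y. \<exists>h\<in>G. h x = y"
    using transitive_if_mixing by blast
  then show ?thesis ..
next
  case False
  then have "{{g x | g. g \<in> G} | x. True} = {range Inl, range Inr}"
    by (intro orbits_if_not_mixing) blast
  then show ?thesis ..
qed

end

lemma Aut_transitive_Inl: "\<exists>g\<in>Aut \<tau>. g (Inl c) = Inl d"
proof
  show "sigma_pair (c + d) 0 (Inl c) = Inl d"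
    by simp
qed (rule sigma_pair_in_Aut)

lemma Aut_transitive_Inr: "\<exists>g\<in>Aut \<tau>. g (Inr c) = Inr d"
proof
  show "sigma_pair 0 (c + d) (Inr c) = Inr d"
    by simp
qed (rule sigma_pair_in_Aut)

theorem proposition5:
  fixes \<tau> :: "bit ^ ('n::finite) \<Rightarrow> bit ^ 'n"
  assumes "bij \<tau>" and "\<tau> 0 = 0"
  shows "(\<forall>a b. sigma_pair a b \<in> Aut \<tau>) \<and>
         ((\<forall>x y. \<exists>g\<in>Aut \<tau>. g x = y) \<or>
          point_orbits \<tau> = {range Inl, range Inr})"
proof -
  interpret perm_group_transitive_on_summands "Aut \<tau>"
    by unfold_locales
      (simp_all add: Aut_bij Aut_comp Aut_inv Aut_transitive_Inl Aut_transitive_Inr)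
  show ?thesis
    using sigma_pair_in_Aut transitive_or_two_orbits unfolding point_orbits_def by blast
qed

end
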